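(* Let $(k_n)_{n\geq1}$ be scalars and let $\kappa$ be the infinitesimal character of the gap-insertion Hopf algebra $\mathbf{H}$ of noncrossing partitions with $\kappa(I_n)=k_n$ for $n\geq1$ ($I_n=\{[n]\}$) and $\kappa(P)=0$ for every other noncrossing partition. Let $\mathcal{E}_\prec(\kappa)$ be the unique $\phi\in\mathbf{H}^*$ with $\phi=\varepsilon+\kappa\prec\phi$. Then for every nonempty noncrossing partition $P$, $\mathcal{E}_\prec(\kappa)(P)=\prod_{\pi\in P}k_{\sharp\pi}$, and for every $n\geq1$ $$(\mathcal{E}_\prec(\kappa)\curvearrowleft\zeta)(J_n)=\sum_{Q\in\operatorname{NCP}(n)}\prod_{\pi\in Q}k_{\sharp\pi},$$ where $J_n=\{\{1\},\dots,\{n\}\}$ and $\zeta$ is the character of $\mathbf{B}$ with $\zeta(P)=1$ for every nonempty noncrossing partition $P$.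
   Context: $\operatorname{NCP}(n)$ is the set of noncrossing partitions of $[n]$ (no $a<c<b<d$ with $a,b$ in one block and $c,d$ in another); partitions of finite linearly ordered sets are identified with partitions of $[n]$ via the order-preserving bijection; $P_{|X}$ is the induced partition; $\sharp\pi$ is the cardinality of a block. $\operatorname{Conv}(X)=\{\min X,\dots,\max X\}$; on blocks $\pi\to\rho$ iff $\operatorname{Conv}(\pi)\cap\rho\neq\emptyset$ (transitively closed). Upperset $U$: ($\pi\in U,\pi\to\rho$)$\Rightarrow\rho\in U$; lowerset $L$: ($\pi\in L,\sigma\to\pi$)$\Rightarrow\sigma\in L$. A cut $(L,U)$ splits the blocks into a lowerset $L$ and complement $U$; $L$ is identified with the restriction of $P$ to the union of its blocks, elements $x_1<\dots<x_k$; $D_0=\{y<x_1\}$, $D_i=\{x_i<y<x_{i+1}\}$, $D_k=\{y>x_k\}$, $U_i=P_{|D_i}$, $\overline U$ = ordered product of nonempty $U_i$. $\mathbf H$: free associative unital algebra on nonempty noncrossing partitions, basis of multipartitions $P_1\cdots P_r$ (viewed as partitions of $[n_1+\dots+n_r]$ by shifting); cuts of multipartitions are tuples of cuts, $L=L_1\cdots L_r$, $\overline U=\overline{U_1}\cdots\overline{U_r}$. Counit $\varepsilon$ ($1$ on $\mathbf 1$, $0$ on nonempty monomials). $\Delta_\prec(P)=\sum_{\text{cuts},1\in L}L\otimes\overline U$ for nonempty $P$; $(f\prec g)(\mathbf1)=0$, $(f\prec g)(x)=(f\otimes g)\Delta_\prec(x)$ on nonempty multipartitions. Infinitesimal character: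 linear form vanishing on $\mathbf1$ and on products of two nonempty monomials. $\mathbf B$: free commutative unital algebra on nonempty noncrossing partitions; characters are unital algebra maps to $\mathbb K$. For noncrossing $P\leq Q$ (refinement), $Q=\{\tau_1,\dots,\tau_l\}$, $P/Q=P_{|\tau_1}\cdots P_{|\tau_l}$. Coaction $\rho:\mathbf H\to\mathbf H\otimes\mathbf B$: algebra morphism, $\rho(P)=\sum_{Q\geq P\text{ noncrossing}}Q\otimes P/Q$; $\alpha\curvearrowleft\phi=(\alpha\otimes\phi)\circ\rho$. *)

theory Defs
  imports Main
begin

type_synonym ncpart = "nat set set"

definition is_partition_of :: "nat set \<Rightarrow> ncpart \<Rightarrow> bool" where
  "is_partition_of S P \<longleftrightarrow> (\<forall>\<pi>\<in>P. \<pi> \<noteq> {}) \<and>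
     (\<forall>\<pi>\<in>P. \<forall>\<rho>\<in>P. \<pi> \<noteq> \<rho> \<longrightarrow> \<pi> \<inter> \<rho> = {}) \<and> \<Union>P = S"

definition noncrossing :: "ncpart \<Rightarrow> bool" where
  "noncrossing P \<longleftrightarrow> \<not> (\<exists>\<pi>\<in>P. \<exists>\<rho>\<in>P. \<pi> \<noteq> \<rho> \<and>
     (\<exists>a b c d. a < c \<and> c < b \<and> b < d \<and> a \<in> \<pi> \<and> b \<in> \<pi> \<and> c \<in> \<rho> \<and> d \<in> \<rho>))"

definition NCP :: "nat \<Rightarrow> ncpart set" where
  "NCP n = {P. is_partition_of {1..n} P \<and> noncrossing P}"

text \<open>nonempty noncrossing partitions (generators of H and B)\<close>
definition nonempty_ncp :: "ncpart \<Rightarrow> bool" where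
  "nonempty_ncp P \<longleftrightarrow> (\<exists>n\<ge>1. P \<in> NCP n)"

definition I_part :: "nat \<Rightarrow> ncpart" where "I_part n = {{1..n}}"
definition J_part :: "nat \<Rightarrow> ncpart" where "J_part n = (\<lambda>i. {i}) ` {1..n}"

definition refines :: "ncpart \<Rightarrow> ncpart \<Rightarrow> bool" where
  "refines P Q \<longleftrightarrow> (\<forall>\<pi>\<in>P. \<exists>\<tau>\<in>Q. \<pi> \<subseteq> \<tau>)"

text \<open>Identification of a partition of a finite set of naturals with a partition
  of [m] via the order-preserving bijection.\<close>
definition rank :: "nat set \<Rightarrow> nat \<Rightarrow> nat" where
  "rank S x = card {y\<in>S. y < x} + 1"

definition standardize :: "ncpart \<Rightarrow> ncpart" where
  "standardize P = (\<lambda>\<pi>. rank (\<Union>P) ` \<pi>) ` P"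

definition restrict_part :: "ncpart \<Rightarrow> nat set \<Rightarrow> ncpart" where
  "restrict_part P X = {\<pi> \<inter> X | \<pi>. \<pi> \<in> P \<and> \<pi> \<inter> X \<noteq> {}}"

text \<open>A multipartition P_1 ... P_r is a list of nonempty noncrossing partitions;
  the empty list is the unit 1.\<close>
definition multipartition :: "ncpart list \<Rightarrow> bool" where
  "multipartition xs \<longleftrightarrow> (\<forall>P\<in>set xs. nonempty_ncp P)"

text \<open>Linear forms on H are given by their values on the basis of multipartitions.\<close>
definition counit :: "ncpart list \<Rightarrow> 'a::comm_ring_1" where
  "counit xs = (if xs = [] then 1 else 0)"

definition infinitesimal_char :: "(ncpart list \<Rightarrow> 'a::comm_ring_1) \<Rightarrow> bool" where
  "infinitesimal_char f \<longleftrightarrow> f [] = 0 \<and>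
     (\<forall>xs ys. multipartition xs \<and> multipartition ys \<and> xs \<noteq> [] \<and> ys \<noteq> []
        \<longrightarrow> f (xs @ ys) = 0)"

definition Conv :: "nat set \<Rightarrow> nat set" where
  "Conv X = {Min X..Max X}"

definition arrow :: "ncpart \<Rightarrow> (nat set \<times> nat set) set" where
  "arrow P = {(\<pi>, \<rho>). \<pi> \<in> P \<and> \<rho> \<in> P \<and> Conv \<pi> \<inter> \<rho> \<noteq> {}}\<^sup>+"

definition lowerset :: "ncpart \<Rightarrow> nat set set \<Rightarrow> bool" where
  "lowerset P L \<longleftrightarrow> L \<subseteq> P \<and> (\<forall>\<pi>\<in>L. \<forall>\<sigma>. (\<sigma>, \<pi>) \<in> arrow P \<longrightarrow> \<sigma> \<in> L)"

text \<open>A cut (L,U) is determined by its lowerset L (U = P - L).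
  L as a partition: restriction of P to the union of its blocks (= L), standardized.\<close>
definition cut_L :: "ncpart \<Rightarrow> nat set set \<Rightarrow> ncpart" where
  "cut_L P L = standardize (restrict_part P (\<Union>L))"

text \<open>Gaps D_0,...,D_k of the elements x_1 < ... < x_k of L (0-indexed list)\<close>
definition gap :: "ncpart \<Rightarrow> nat set set \<Rightarrow> nat \<Rightarrow> nat set" where
  "gap P L i = (let xs = sorted_list_of_set (\<Union>L); k = length xs in
     {y \<in> \<Union>P. (i = 0 \<or> xs ! (i - 1) < y) \<and> (i = k \<or> y < xs ! i)})"

text \<open>\<overline>U = ordered product of the nonempty U_i = P_{|D_i}\<close>
definition cut_Ubar :: "ncpart \<Rightarrow> nat set set \<Rightarrow> ncpart list" where
  "cut_Ubar P L = map (\<lambda>i. standardize (restrict_part P (gap P L i)))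
      (filter (\<lambda>i. gap P L i \<noteq> {}) [0..<card (\<Union>L) + 1])"

text \<open>Cuts of a multipartition are tuples of cuts; L = L_1 ... L_r (empty factors
  are the unit), \<overline>U = \<overline>U_1 ... \<overline>U_r.\<close>
definition multi_L :: "ncpart list \<Rightarrow> nat set set list \<Rightarrow> ncpart list" where
  "multi_L xs Ls = filter (\<lambda>P. P \<noteq> {}) (map2 cut_L xs Ls)"

definition multi_Ubar :: "ncpart list \<Rightarrow> nat set set list \<Rightarrow> ncpart list" where
  "multi_Ubar xs Ls = concat (map2 cut_Ubar xs Ls)"

definition multi_cuts :: "ncpart list \<Rightarrow> nat set set list set" where
  "multi_cuts xs = {Ls. length Ls = length xs \<and> (\<forall>i<length xs. lowerset (xs ! i) (Ls ! i))}"

text \<open>half-shuffle product: (f \<prec> g)(1) = 0, (f \<prec> g)(x) = (f \<otimes> g) \<Delta>_\<prec>(x),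
  \<Delta>_\<prec>(x) = sum over cuts with 1 \<in> L of L \<otimes> \<overline>U; the element 1 of the
  concatenated multipartition lies in the first factor.\<close>
definition prec :: "(ncpart list \<Rightarrow> 'a::comm_ring_1) \<Rightarrow> (ncpart list \<Rightarrow> 'a) \<Rightarrow> ncpart list \<Rightarrow> 'a" where
  "prec f g xs = (if xs = [] then 0 else
     (\<Sum>Ls \<in> {Ls \<in> multi_cuts xs. 1 \<in> \<Union>(Ls ! 0)}.
        f (multi_L xs Ls) * g (multi_Ubar xs Ls)))"

text \<open>A character of B is determined by its values psi on the generators
  (nonempty noncrossing partitions): its value on P/Q = P_{|\<tau>1} ... P_{|\<tau>l} is
  the product of psi(P_{|\<tau>j}).  (\<alpha> \<curvearrowleft> \<phi>) = (\<alpha> \<otimes> \<phi>) \<circ> \<rho>, \<rho> multiplicative.\<close>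
definition quot_char :: "(ncpart \<Rightarrow> 'a::comm_ring_1) \<Rightarrow> ncpart \<Rightarrow> ncpart \<Rightarrow> 'a" where
  "quot_char psi P Q = (\<Prod>\<tau>\<in>Q. psi (standardize (restrict_part P \<tau>)))"

definition coact :: "(ncpart list \<Rightarrow> 'a::comm_ring_1) \<Rightarrow> (ncpart \<Rightarrow> 'a) \<Rightarrow> ncpart list \<Rightarrow> 'a" where
  "coact \<alpha> psi xs = (\<Sum>Qs \<in> {Qs. length Qs = length xs \<and>
        (\<forall>i<length xs. Qs ! i \<in> NCP (card (\<Union>(xs ! i))) \<and> refines (xs ! i) (Qs ! i))}.
      \<alpha> Qs * (\<Prod>i<length xs. quot_char psi (xs ! i) (Qs ! i)))"

definition zeta :: "ncpart \<Rightarrow> 'a::comm_ring_1" where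
  "zeta P = 1"

end

theory Submission
  imports Defs
begin

text \<open>
  Let \<open>\<pi>\<^sub>1\<close> be the block of \<open>P\<^sub>1\<close> containing \<open>1\<close>. Since \<open>P\<^sub>1\<close> is noncrossing, no block
  points into \<open>\<pi>\<^sub>1\<close>, so \<open>{\<pi>\<^sub>1}\<close> is a lowerset, and the blocks of \<open>P\<^sub>1\<close> other than \<open>\<pi>\<^sub>1\<close> are
  distributed over the gaps of \<open>\<pi>\<^sub>1\<close>. In the cut expansion of \<open>(\<kappa> \<prec> \<phi>)(P\<^sub>1 \<cdots> P\<^sub>r)\<close>,
  \<open>\<kappa>\<close> kills every lower part that is a product of two factors or a partition with at least
  two blocks, so only the cut with lower part \<open>{\<pi>\<^sub>1}\<close> survives:
  \<open>\<phi>(P\<^sub>1 \<cdots> P\<^sub>r) = k\<^bsub>\<sharp>\<pi>\<^sub>1\<^esub> \<phi>(\<overline>U P\<^sub>2 \<cdots> P\<^sub>r)\<close>, where \<open>\<overline>U\<close> consists of the restrictions of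
  \<open>P\<^sub>1\<close> to the gaps of \<open>\<pi>\<^sub>1\<close> and carries exactly the remaining blocks of \<open>P\<^sub>1\<close>. Induction on
  the total number of blocks gives \<open>\<phi>(P) = \<Prod>\<pi>\<in>P. k\<^bsub>\<sharp>\<pi>\<^esub>\<close>. For the second formula,
  every \<open>Q \<in> NCP(n)\<close> is coarser than \<open>J\<^sub>n\<close> and \<open>\<zeta>\<close> is \<open>1\<close> on every quotient, so
  \<open>(\<phi> \<curvearrowleft> \<zeta>)(J\<^sub>n) = \<Sum>Q\<in>NCP(n). \<phi>(Q)\<close>.
\<close>

section \<open>Restricting and relabelling noncrossing partitions\<close>

lemma noncrossingI:
  assumes "\<And>\<pi> \<rho> a b c d. \<lbrakk>\<pi> \<in> P; \<rho> \<in> P; a < c; c < b; b < d;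
    a \<in> \<pi>; b \<in> \<pi>; c \<in> \<rho>; d \<in> \<rho>\<rbrakk> \<Longrightarrow> \<pi> = \<rho>"
  shows "noncrossing P"
  using assms unfolding noncrossing_def by (metis (no_types))

lemma noncrossingD:
  assumes "noncrossing P" "\<pi> \<in> P" "\<rho> \<in> P" "a < c" "c < b" "b < d"
    "a \<in> \<pi>" "b \<in> \<pi>" "c \<in> \<rho>" "d \<in> \<rho>"
  shows "\<pi> = \<rho>"
  using assms unfolding noncrossing_def by (metis (no_types))

lemma Union_NCP: "P \<in> NCP n \<Longrightarrow> \<Union>P = {1..n}"
  by (simp add: NCP_def is_partition_of_def)

lemma finite_NCP: "P \<in> NCP n \<Longrightarrow> finite P"
  using Union_NCP by (metis finite_UnionD finite_atLeastAtMost)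

lemma is_partition_of_image:
  assumes "inj_on f S" "is_partition_of S Q"
  shows "is_partition_of (f ` S) ((`) f ` Q)"
proof -
  have S: "\<Union>Q = S" and blocks: "\<And>\<pi>. \<pi> \<in> Q \<Longrightarrow> \<pi> \<noteq> {} \<and> \<pi> \<subseteq> S"
    and disj: "\<And>\<pi> \<rho>. \<pi> \<in> Q \<Longrightarrow> \<rho> \<in> Q \<Longrightarrow> \<pi> \<noteq> \<rho> \<Longrightarrow> \<pi> \<inter> \<rho> = {}"
    using assms(2) by (auto simp: is_partition_of_def)
  have "f ` \<pi> \<inter> f ` \<rho> = {}" if "\<pi> \<in> Q" "\<rho> \<in> Q" "f ` \<pi> \<noteq> f ` \<rho>" for \<pi> \<rho>
  proof -
    have "\<pi> \<inter> \<rho> = {}" using that disj by blast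
    then show ?thesis using inj_on_image_Int[OF assms(1)] blocks that(1,2) by (metis image_empty)
  qed
  with S blocks show ?thesis unfolding is_partition_of_def by (auto simp: image_Union)
qed

lemma noncrossing_image:
  assumes mono: "strict_mono_on (\<Union>Q) f" and nc: "noncrossing Q"
  shows "noncrossing ((`) f ` Q)"
proof (rule noncrossingI)
  fix \<beta> \<gamma> a b c d
  assume "\<beta> \<in> (`) f ` Q" "\<gamma> \<in> (`) f ` Q" and order: "a < c" "c < b" "b < d"
    and "a \<in> \<beta>" "b \<in> \<beta>" "c \<in> \<gamma>" "d \<in> \<gamma>"
  then obtain \<pi> \<rho> a' b' c' d' where blocks: "\<pi> \<in> Q" "\<rho> \<in> Q" "\<beta> = f ` \<pi>" "\<gamma> = f ` \<rho>"
    and elems: "a' \<in> \<pi>" "b' \<in> \<pi>" "c' \<in> \<rho>" "d' \<in> \<rho>"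
    and "a = f a'" "b = f b'" "c = f c'" "d = f d'"
    by blast
  with order have "a' < c'" "c' < b'" "b' < d'"
    using strict_mono_on_less[OF mono] by blast+
  then have "\<pi> = \<rho>" by (rule noncrossingD[OF nc blocks(1,2) _ _ _ elems])
  with blocks show "\<beta> = \<gamma>" by simp
qed

lemma is_partition_of_restrict_part:
  assumes "is_partition_of S P" "X \<subseteq> S"
  shows "is_partition_of X (restrict_part P X)"
proof -
  have "\<Union>(restrict_part P X) = X"
  proof
    show "X \<subseteq> \<Union>(restrict_part P X)"
    proof
      fix y assume "y \<in> X"
      with assms obtain \<pi> where "\<pi> \<in> P" "y \<in> \<pi>" by (auto simp: is_partition_of_def)
      with \<open>y \<in> X\<close> show "y \<in> \<Union>(restrict_part P X)" by (auto simp: restrict_part_def)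
    qed
  qed (auto simp: restrict_part_def)
  moreover have "\<beta> \<inter> \<gamma> = {}"
    if blocks: "\<beta> \<in> restrict_part P X" "\<gamma> \<in> restrict_part P X" and "\<beta> \<noteq> \<gamma>" for \<beta> \<gamma>
  proof -
    obtain \<pi> \<rho> where "\<pi> \<in> P" "\<rho> \<in> P" "\<beta> = \<pi> \<inter> X" "\<gamma> = \<rho> \<inter> X"
      using blocks by (auto simp: restrict_part_def)
    with \<open>\<beta> \<noteq> \<gamma>\<close> assms(1) show ?thesis by (auto simp: is_partition_of_def)
  qed
  moreover have "\<forall>\<beta>\<in>restrict_part P X. \<beta> \<noteq> {}" by (auto simp: restrict_part_def)
  ultimately show ?thesis by (simp add: is_partition_of_def)
qed

lemma noncrossing_restrict_part:
  assumes "noncrossing P"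
  shows "noncrossing (restrict_part P X)"
proof (rule noncrossingI)
  fix \<beta> \<gamma> a b c d
  assume blocks: "\<beta> \<in> restrict_part P X" "\<gamma> \<in> restrict_part P X"
    and crossing: "a < c" "c < b" "b < d" "a \<in> \<beta>" "b \<in> \<beta>" "c \<in> \<gamma>" "d \<in> \<gamma>"
  obtain \<pi> \<rho> where "\<pi> \<in> P" "\<rho> \<in> P" "\<beta> = \<pi> \<inter> X" "\<gamma> = \<rho> \<inter> X"
    using blocks by (auto simp: restrict_part_def)
  with crossing have "\<pi> = \<rho>" using noncrossingD[OF assms] by blast
  with \<open>\<beta> = \<pi> \<inter> X\<close> \<open>\<gamma> = \<rho> \<inter> X\<close> show "\<beta> = \<gamma>" by simp
qed

lemma restrict_part_Union_blocks:
  assumes "is_partition_of S P" "L \<subseteq> P"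
  shows "restrict_part P (\<Union>L) = L"
proof -
  have restr: "\<pi> \<inter> \<Union>L = (if \<pi> \<in> L then \<pi> else {})" if "\<pi> \<in> P" for \<pi>
  proof (cases "\<pi> \<in> L")
    case False
    have "\<pi> \<inter> \<rho> = {}" if "\<rho> \<in> L" for \<rho>
      using assms \<open>\<pi> \<in> P\<close> False that unfolding is_partition_of_def by (metis subsetD)
    with False show ?thesis by auto
  qed auto
  show ?thesis
  proof
    show "restrict_part P (\<Union>L) \<subseteq> L"
    proof
      fix \<beta> assume "\<beta> \<in> restrict_part P (\<Union>L)"
      then obtain \<pi> where "\<pi> \<in> P" "\<beta> = \<pi> \<inter> \<Union>L" "\<pi> \<inter> \<Union>L \<noteq> {}"
        by (auto simp: restrict_part_def)
      with restr[of \<pi>] show "\<beta> \<in> L" by (simp split: if_splits)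
    qed
    show "L \<subseteq> restrict_part P (\<Union>L)"
    proof
      fix \<pi> assume "\<pi> \<in> L"
      with assms have "\<pi> \<in> P" "\<pi> \<noteq> {}" by (auto simp: is_partition_of_def)
      with restr[of \<pi>] \<open>\<pi> \<in> L\<close> show "\<pi> \<in> restrict_part P (\<Union>L)"
        unfolding restrict_part_def by auto
    qed
  qed
qed

lemma rank_less_rank:
  assumes "finite S" "x \<in> S" "x < y"
  shows "rank S x < rank S y"
proof -
  have "{z\<in>S. z < x} \<subset> {z\<in>S. z < y}" using assms by auto
  then show ?thesis
    using assms(1) by (simp add: rank_def psubset_card_mono)
qed

lemma strict_mono_on_rank: "finite S \<Longrightarrow> strict_mono_on S (rank S)"
  by (simp add: rank_less_rank strict_mono_onI)

lemma rank_image: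
  assumes "finite S"
  shows "rank S ` S = {1..card S}"
proof -
  have "rank S x \<in> {1..card S}" if "x \<in> S" for x
  proof -
    have "{z\<in>S. z < x} \<subset> S" using that by auto
    then show ?thesis using assms by (simp add: rank_def psubset_card_mono Suc_le_eq)
  qed
  moreover have "card (rank S ` S) = card S"
    using strict_mono_on_imp_inj_on[OF strict_mono_on_rank[OF assms]] by (simp add: card_image)
  ultimately show ?thesis by (simp add: card_subset_eq image_subset_iff)
qed

lemma rank_atLeastAtMost: "x \<in> {1..n} \<Longrightarrow> rank {1..n} x = x"
proof -
  assume "x \<in> {1..n}"
  then have "{y \<in> {1..n}. y < x} = {1..<x}" by auto
  with \<open>x \<in> {1..n}\<close> show ?thesis by (simp add: rank_def)
qed

lemma standardize_in_NCP:
  assumes "finite S" "is_partition_of S Q" "noncrossing Q"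
  shows "standardize Q \<in> NCP (card S)"
proof -
  have S: "\<Union>Q = S" using assms(2) by (simp add: is_partition_of_def)
  have "is_partition_of (rank S ` S) (standardize Q)"
    using is_partition_of_image[OF strict_mono_on_imp_inj_on[OF strict_mono_on_rank] assms(2)]
      assms(1) by (simp add: standardize_def S)
  moreover have "noncrossing (standardize Q)"
    using noncrossing_image[OF _ assms(3)] strict_mono_on_rank[OF assms(1)]
    by (simp add: standardize_def S)
  ultimately show ?thesis using rank_image[OF assms(1)] by (simp add: NCP_def)
qed

lemma inj_on_standardize_blocks:
  assumes "finite (\<Union>Q)"
  shows "inj_on (\<lambda>\<pi>. rank (\<Union>Q) ` \<pi>) Q"
    and "\<pi> \<in> Q \<Longrightarrow> card (rank (\<Union>Q) ` \<pi>) = card \<pi>"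
proof -
  have inj: "inj_on (rank (\<Union>Q)) (\<Union>Q)"
    by (rule strict_mono_on_imp_inj_on[OF strict_mono_on_rank[OF assms]])
  show "inj_on (\<lambda>\<pi>. rank (\<Union>Q) ` \<pi>) Q"
    by (rule inj_onI) (meson inj Union_upper inj_on_image_eq_iff)
  show "\<pi> \<in> Q \<Longrightarrow> card (rank (\<Union>Q) ` \<pi>) = card \<pi>"
    by (meson inj Union_upper card_image inj_on_subset)
qed

lemma card_standardize: "finite (\<Union>Q) \<Longrightarrow> card (standardize Q) = card Q"
  unfolding standardize_def by (rule card_image[OF inj_on_standardize_blocks(1)])

lemma prod_card_standardize:
  assumes "finite (\<Union>Q)"
  shows "(\<Prod>\<beta>\<in>standardize Q. g (card \<beta>)) = (\<Prod>\<pi>\<in>Q. g (card \<pi>))"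
  unfolding standardize_def using inj_on_standardize_blocks[OF assms]
  by (simp add: prod.reindex)

lemma standardize_NCP:
  assumes "P \<in> NCP n"
  shows "standardize P = P"
proof -
  have S: "\<Union>P = {1..n}" by (rule Union_NCP[OF assms])
  have "rank {1..n} ` \<pi> = \<pi>" if "\<pi> \<in> P" for \<pi>
  proof -
    have "\<forall>x\<in>\<pi>. rank {1..n} x = x"
      using that S by (metis UnionI rank_atLeastAtMost)
    then show ?thesis by simp
  qed
  then show ?thesis by (simp add: standardize_def S)
qed

lemma standardize_singleton: "finite \<pi> \<Longrightarrow> standardize {\<pi>} = I_part (card \<pi>)"
  by (simp add: standardize_def I_part_def rank_image)

section \<open>Gaps between the points of a finite set\<close>

lemma set_take_sorted_list_of_set:
  assumes "finite S" "j < card S"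
  shows "set (take j (sorted_list_of_set S)) = {x\<in>S. x < sorted_list_of_set S ! j}"
proof -
  define xs where "xs = sorted_list_of_set S"
  have xs: "sorted_wrt (<) xs" "set xs = S" "length xs = card S" using assms by (auto simp: xs_def)
  have "x \<in> set (take j xs) \<longleftrightarrow> x \<in> S \<and> x < xs ! j" for x
  proof
    assume "x \<in> set (take j xs)"
    then obtain m where "m < j" "x = xs ! m" by (auto simp: in_set_conv_nth)
    then show "x \<in> S \<and> x < xs ! j" using xs assms(2) sorted_wrt_nth_less[OF xs(1)]
      by (metis length_take min.strict_order_iff nth_mem nth_take order.strict_trans)
  next
    assume x: "x \<in> S \<and> x < xs ! j"
    then obtain m where m: "m < length xs" "x = xs ! m" using xs by (auto simp: in_set_conv_nth)
    have "m < j"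
    proof (rule ccontr)
      assume "\<not> m < j"
      then have "xs ! j \<le> xs ! m" using sorted_wrt_nth_less[OF xs(1) _ m(1), of j] by force
      then show False using x m by (simp add: leD)
    qed
    then show "x \<in> set (take j xs)" using m by (auto simp: in_set_conv_nth)
  qed
  then show ?thesis by (auto simp: xs_def)
qed

lemma card_less_sorted_list_of_set_nth:
  assumes "finite S" "j < card S"
  shows "card {x\<in>S. x < sorted_list_of_set S ! j} = j"
proof -
  have "card {x\<in>S. x < sorted_list_of_set S ! j} = length (take j (sorted_list_of_set S))"
    unfolding set_take_sorted_list_of_set[OF assms, symmetric] by (simp add: distinct_card)
  with assms(2) show ?thesis by simp
qed

lemma sorted_list_of_set_nth_less_iff:
  assumes fin: "finite S" and j: "j < card S"
  shows "sorted_list_of_set S ! j < y \<longleftrightarrow> j < card {x\<in>S. x < y}"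
proof
  let ?x = "sorted_list_of_set S ! j"
  have "?x \<in> set (sorted_list_of_set S)" using j by (intro nth_mem) simp
  then have x: "?x \<in> S" using fin by simp
  have below_x: "card {z\<in>S. z < ?x} = j" by (rule card_less_sorted_list_of_set_nth[OF assms])
  show "j < card {x\<in>S. x < y}" if "?x < y"
  proof -
    have "insert ?x {z\<in>S. z < ?x} \<subseteq> {z\<in>S. z < y}" using that x by auto
    then have "card (insert ?x {z\<in>S. z < ?x}) \<le> card {z\<in>S. z < y}"
      using fin by (intro card_mono) auto
    with below_x fin show ?thesis by simp
  qed
  show "?x < y" if "j < card {x\<in>S. x < y}"
  proof (rule ccontr)
    assume "\<not> ?x < y"
    then have "{z\<in>S. z < y} \<subseteq> {z\<in>S. z < ?x}" by auto
    then have "card {z\<in>S. z < y} \<le> card {z\<in>S. z < ?x}" by (rule card_mono[rotated]) (use fin in simp)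
    with below_x have "card {z\<in>S. z < y} \<le> j" by simp
    with that show False by simp
  qed
qed

lemma sorted_list_of_set_nth_card_less:
  assumes fin: "finite S" and y: "y \<in> S"
  shows "card {x\<in>S. x < y} < card S" and "sorted_list_of_set S ! card {x\<in>S. x < y} = y"
proof -
  have "y \<in> set (sorted_list_of_set S)" using y fin by simp
  then obtain m where m: "m < card S" "y = sorted_list_of_set S ! m"
    by (auto simp: in_set_conv_nth)
  then have "card {x\<in>S. x < y} = m" using card_less_sorted_list_of_set_nth[OF fin] by simp
  with m show "card {x\<in>S. x < y} < card S" and "sorted_list_of_set S ! card {x\<in>S. x < y} = y"
    by simp_all
qed

lemma gap_eq:
  assumes fin: "finite (\<Union>L)" and i: "i \<le> card (\<Union>L)"
  shows "gap P L i = {y \<in> \<Union>P. y \<notin> \<Union>L \<and> card {x\<in>\<Union>L. x < y} = i}"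
proof -
  define S where "S = \<Union>L"
  define xs where "xs = sorted_list_of_set S"
  define below where "below y = card {x\<in>S. x < y}" for y
  have fS: "finite S" and len: "length xs = card S" and iS: "i \<le> card S"
    using fin i by (simp_all add: S_def xs_def)
  have less_iff: "xs ! j < y \<longleftrightarrow> j < below y" if "j < card S" for j y
    using sorted_list_of_set_nth_less_iff[OF fS that] by (simp add: xs_def below_def)
  have below_le: "below y \<le> card S" for y
    unfolding below_def using fS by (intro card_mono) auto
  have "(i = 0 \<or> xs ! (i - 1) < y) \<and> (i = length xs \<or> y < xs ! i) \<longleftrightarrow> y \<notin> S \<and> below y = i"
    for y
  proof -
    have lower: "(i = 0 \<or> xs ! (i - 1) < y) \<longleftrightarrow> i \<le> below y"
      using less_iff[of "i - 1" y] iS by (cases i) auto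
    show ?thesis
    proof (cases "i < card S")
      case True
      have "xs ! i \<in> S" using True fS by (metis len nth_mem set_sorted_list_of_set xs_def)
      then show ?thesis
        using sorted_list_of_set_nth_card_less[OF fS, of y] less_iff[OF True, of y] True lower len
        unfolding below_def xs_def by (auto simp: not_less_iff_gr_or_eq)
    next
      case False
      then show ?thesis
        using sorted_list_of_set_nth_card_less(1)[OF fS, of y] lower len iS below_le[of y]
        unfolding below_def by auto
    qed
  qed
  then show ?thesis unfolding gap_def Let_def by (auto simp: xs_def S_def below_def)
qed

section \<open>The block containing 1\<close>

locale first_block =
  fixes P :: ncpart and n :: nat and \<pi>\<^sub>1 :: "nat set"
  assumes NCP: "P \<in> NCP n" and first_block: "\<pi>\<^sub>1 \<in> P" and one_in_first_block: "1 \<in> \<pi>\<^sub>1"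
begin

lemma partition: "is_partition_of {1..n} P" and noncrossing: "noncrossing P"
  using NCP by (simp_all add: NCP_def)

lemma Union_blocks: "\<Union>P = {1..n}"
  by (rule Union_NCP[OF NCP])

lemma finite_blocks: "finite P"
  by (rule finite_NCP[OF NCP])

lemma finite_block: "\<sigma> \<in> P \<Longrightarrow> finite \<sigma>"
  using Union_blocks by (metis Union_upper finite_atLeastAtMost finite_subset)

lemma block_nonempty: "\<sigma> \<in> P \<Longrightarrow> \<sigma> \<noteq> {}"
  using partition by (simp add: is_partition_of_def)

lemma disjoint_first_block: "\<sigma> \<in> P \<Longrightarrow> \<sigma> \<noteq> \<pi>\<^sub>1 \<Longrightarrow> \<sigma> \<inter> \<pi>\<^sub>1 = {}"
  using partition first_block by (simp add: is_partition_of_def)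

lemma first_block_unique:
  assumes "\<beta> \<in> P" "1 \<in> \<beta>"
  shows "\<beta> = \<pi>\<^sub>1"
  using disjoint_first_block[OF assms(1)] assms(2) one_in_first_block by blast

lemma other_block_gt_1:
  assumes "\<sigma> \<in> P" "\<sigma> \<noteq> \<pi>\<^sub>1" "y \<in> \<sigma>"
  shows "1 < y"
proof -
  have "y \<noteq> 1" using disjoint_first_block[OF assms(1,2)] assms(3) one_in_first_block by auto
  moreover have "y \<in> {1..n}" using assms(1,3) Union_blocks by blast
  ultimately show ?thesis by simp
qed

text \<open>Because \<open>1 \<in> \<pi>\<^sub>1\<close>, any block that surrounds a point of \<open>\<pi>\<^sub>1\<close> would cross \<open>\<pi>\<^sub>1\<close>.\<close>

lemma no_arrow_into_first_block:
  assumes "\<sigma> \<in> P" "Conv \<sigma> \<inter> \<pi>\<^sub>1 \<noteq> {}"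
  shows "\<sigma> = \<pi>\<^sub>1"
proof (rule ccontr)
  assume other: "\<sigma> \<noteq> \<pi>\<^sub>1"
  obtain b where b: "b \<in> \<pi>\<^sub>1" "Min \<sigma> \<le> b" "b \<le> Max \<sigma>" using assms(2) by (auto simp: Conv_def)
  have ends: "Min \<sigma> \<in> \<sigma>" "Max \<sigma> \<in> \<sigma>"
    using finite_block[OF assms(1)] block_nonempty[OF assms(1)] by simp_all
  have "b \<notin> \<sigma>" using disjoint_first_block[OF assms(1) other] b(1) by auto
  with b ends have "Min \<sigma> < b" "b < Max \<sigma>" by (metis le_neq_implies_less)+
  moreover have "1 < Min \<sigma>" using other_block_gt_1[OF assms(1) other ends(1)] .
  ultimately have "\<pi>\<^sub>1 = \<sigma>"
    using noncrossingD[OF noncrossing first_block assms(1) _ _ _ one_in_first_block b(1) ends]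
    by blast
  with other show False by simp
qed

lemma lowerset_first_block: "lowerset P {\<pi>\<^sub>1}"
  unfolding lowerset_def
proof (intro conjI ballI allI impI)
  fix \<pi> \<sigma> assume "\<pi> \<in> {\<pi>\<^sub>1}" "(\<sigma>, \<pi>) \<in> arrow P"
  then have "(\<sigma>, \<pi>\<^sub>1) \<in> {(\<pi>, \<rho>). \<pi> \<in> P \<and> \<rho> \<in> P \<and> Conv \<pi> \<inter> \<rho> \<noteq> {}}\<^sup>+"
    by (simp add: arrow_def)
  then show "\<sigma> \<in> {\<pi>\<^sub>1}"
    by (induction rule: converse_trancl_induct) (auto dest: no_arrow_into_first_block)
qed (use first_block in simp)

definition gap_index :: "nat \<Rightarrow> nat" where
  "gap_index y = card {x\<in>\<pi>\<^sub>1. x < y}"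

lemma gap_index_le: "gap_index y \<le> card \<pi>\<^sub>1"
  unfolding gap_index_def using finite_block[OF first_block] by (intro card_mono) auto

lemma gap_index_block:
  assumes "\<sigma> \<in> P" "\<sigma> \<noteq> \<pi>\<^sub>1" "y \<in> \<sigma>" "z \<in> \<sigma>"
  shows "gap_index y = gap_index z"
proof -
  have "{x\<in>\<pi>\<^sub>1. x < y} = {x\<in>\<pi>\<^sub>1. x < z}" if "y \<in> \<sigma>" "z \<in> \<sigma>" "y < z" for y z
  proof (rule ccontr)
    assume "{x\<in>\<pi>\<^sub>1. x < y} \<noteq> {x\<in>\<pi>\<^sub>1. x < z}"
    then obtain x where x: "x \<in> \<pi>\<^sub>1" "y \<le> x" "x < z" using \<open>y < z\<close> by force
    have "x \<noteq> y" using disjoint_first_block[OF assms(1,2)] x(1) that(1) by auto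
    with x(2) have "y < x" by simp
    then have "\<pi>\<^sub>1 = \<sigma>"
      using noncrossingD[OF noncrossing first_block assms(1) other_block_gt_1[OF assms(1,2) that(1)]
          _ x(3) one_in_first_block x(1) that(1,2)] by simp
    with assms(2) show False by simp
  qed
  with assms(3,4) show ?thesis unfolding gap_index_def by (metis linorder_neqE_nat)
qed

lemma gap_first_block:
  assumes "i \<le> card \<pi>\<^sub>1"
  shows "gap P {\<pi>\<^sub>1} i = {y \<in> {1..n}. y \<notin> \<pi>\<^sub>1 \<and> gap_index y = i}"
  using gap_eq[of "{\<pi>\<^sub>1}" i P] finite_block[OF first_block] assms Union_blocks
  by (simp add: gap_index_def)

lemma block_subset_gap:
  assumes "\<sigma> \<in> P" "\<sigma> \<noteq> \<pi>\<^sub>1" "y \<in> \<sigma>"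
  shows "\<sigma> \<subseteq> gap P {\<pi>\<^sub>1} (gap_index y)"
proof
  fix z assume "z \<in> \<sigma>"
  then show "z \<in> gap P {\<pi>\<^sub>1} (gap_index y)"
    using assms disjoint_first_block[OF assms(1,2)] Union_blocks gap_index_block[OF assms]
    by (auto simp: gap_first_block[OF gap_index_le])
qed

definition gap_blocks :: "nat \<Rightarrow> nat set set" where
  "gap_blocks i = {\<sigma> \<in> P - {\<pi>\<^sub>1}. \<sigma> \<subseteq> gap P {\<pi>\<^sub>1} i}"

lemma Union_gap_blocks:
  assumes "i \<le> card \<pi>\<^sub>1"
  shows "\<Union>(gap_blocks i) = gap P {\<pi>\<^sub>1} i"
proof
  show "gap P {\<pi>\<^sub>1} i \<subseteq> \<Union>(gap_blocks i)"
  proof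
    fix y assume y: "y \<in> gap P {\<pi>\<^sub>1} i"
    then have "y \<in> \<Union>P" "y \<notin> \<pi>\<^sub>1" "gap_index y = i"
      using Union_blocks by (auto simp: gap_first_block[OF assms])
    then obtain \<sigma> where "\<sigma> \<in> P" "\<sigma> \<noteq> \<pi>\<^sub>1" "y \<in> \<sigma>" by blast
    with block_subset_gap[of \<sigma> y] \<open>gap_index y = i\<close> show "y \<in> \<Union>(gap_blocks i)"
      by (auto simp: gap_blocks_def)
  qed
qed (auto simp: gap_blocks_def)

lemma restrict_part_gap:
  assumes "i \<le> card \<pi>\<^sub>1"
  shows "restrict_part P (gap P {\<pi>\<^sub>1} i) = gap_blocks i"
proof -
  have "gap_blocks i \<subseteq> P" by (auto simp: gap_blocks_def)
  with Union_gap_blocks[OF assms] show ?thesis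
    using restrict_part_Union_blocks[OF partition] by metis
qed

lemma other_blocks_eq_UN_gap_blocks: "P - {\<pi>\<^sub>1} = (\<Union>i\<le>card \<pi>\<^sub>1. gap_blocks i)"
proof
  show "P - {\<pi>\<^sub>1} \<subseteq> (\<Union>i\<le>card \<pi>\<^sub>1. gap_blocks i)"
  proof
    fix \<sigma> assume \<sigma>: "\<sigma> \<in> P - {\<pi>\<^sub>1}"
    then obtain y where "y \<in> \<sigma>" using block_nonempty by blast
    with \<sigma> block_subset_gap have "\<sigma> \<in> gap_blocks (gap_index y)" by (auto simp: gap_blocks_def)
    with gap_index_le show "\<sigma> \<in> (\<Union>i\<le>card \<pi>\<^sub>1. gap_blocks i)" by blast
  qed
qed (auto simp: gap_blocks_def)

lemma disjoint_gap_blocks: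
  assumes "i \<le> card \<pi>\<^sub>1" "j \<le> card \<pi>\<^sub>1" "i \<noteq> j"
  shows "gap_blocks i \<inter> gap_blocks j = {}"
proof (rule ccontr)
  assume "gap_blocks i \<inter> gap_blocks j \<noteq> {}"
  then obtain \<sigma> where \<sigma>: "\<sigma> \<in> P" "\<sigma> \<subseteq> gap P {\<pi>\<^sub>1} i" "\<sigma> \<subseteq> gap P {\<pi>\<^sub>1} j"
    by (auto simp: gap_blocks_def)
  obtain y where "y \<in> \<sigma>" using block_nonempty[OF \<sigma>(1)] by blast
  with \<sigma> have "gap_index y = i" "gap_index y = j"
    using gap_first_block[OF assms(1)] gap_first_block[OF assms(2)] by auto
  with \<open>i \<noteq> j\<close> show False by simp
qed

lemma cut_Ubar_first_block:
  "cut_Ubar P {\<pi>\<^sub>1} = map (\<lambda>i. standardize (gap_blocks i))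
     (filter (\<lambda>i. gap P {\<pi>\<^sub>1} i \<noteq> {}) [0..<card \<pi>\<^sub>1 + 1])"
  unfolding cut_Ubar_def by (auto simp: restrict_part_gap intro!: map_cong)

lemma multipartition_cut_Ubar_first_block: "multipartition (cut_Ubar P {\<pi>\<^sub>1})"
  unfolding multipartition_def cut_Ubar_def
proof
  fix Q assume "Q \<in> set (map (\<lambda>i. standardize (restrict_part P (gap P {\<pi>\<^sub>1} i)))
    (filter (\<lambda>i. gap P {\<pi>\<^sub>1} i \<noteq> {}) [0..<card (\<Union>{\<pi>\<^sub>1}) + 1]))"
  then obtain i where i: "i \<le> card \<pi>\<^sub>1" "gap P {\<pi>\<^sub>1} i \<noteq> {}"
    and Q: "Q = standardize (restrict_part P (gap P {\<pi>\<^sub>1} i))"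
    by (auto simp del: upt_Suc simp: less_Suc_eq_le)
  have gap: "gap P {\<pi>\<^sub>1} i \<subseteq> {1..n}" using gap_first_block[OF i(1)] by auto
  then have "finite (gap P {\<pi>\<^sub>1} i)" by (rule finite_subset) simp
  with i(2) have "card (gap P {\<pi>\<^sub>1} i) \<ge> 1" by (simp add: Suc_le_eq card_gt_0_iff)
  moreover have "Q \<in> NCP (card (gap P {\<pi>\<^sub>1} i))"
    unfolding Q using \<open>finite (gap P {\<pi>\<^sub>1} i)\<close> is_partition_of_restrict_part[OF partition gap]
      noncrossing_restrict_part[OF noncrossing] by (rule standardize_in_NCP)
  ultimately show "nonempty_ncp Q" by (auto simp: nonempty_ncp_def)
qed

lemma prod_list_cut_Ubar_first_block:
  fixes h :: "nat \<Rightarrow> 'b::comm_monoid_mult"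
  shows "(\<Prod>Q\<leftarrow>cut_Ubar P {\<pi>\<^sub>1}. \<Prod>\<beta>\<in>Q. h (card \<beta>)) = (\<Prod>\<sigma>\<in>P - {\<pi>\<^sub>1}. h (card \<sigma>))"
proof -
  let ?gaps = "filter (\<lambda>i. gap P {\<pi>\<^sub>1} i \<noteq> {}) [0..<card \<pi>\<^sub>1 + 1]"
  have finite_gap_blocks: "finite (\<Union>(gap_blocks i))" for i
    using Union_blocks finite_subset[of "\<Union>(gap_blocks i)" "{1..n}"] by (auto simp: gap_blocks_def)
  have empty_gap: "gap_blocks i = {}" if "i \<le> card \<pi>\<^sub>1" "gap P {\<pi>\<^sub>1} i = {}" for i
    using Union_gap_blocks[OF that(1)] that(2) block_nonempty by (auto simp: gap_blocks_def)
  have "(\<Prod>Q\<leftarrow>cut_Ubar P {\<pi>\<^sub>1}. \<Prod>\<beta>\<in>Q. h (card \<beta>)) = (\<Prod>i\<leftarrow>?gaps. \<Prod>\<sigma>\<in>gap_blocks i. h (card \<sigma>))"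
    by (simp add: cut_Ubar_first_block comp_def prod_card_standardize[OF finite_gap_blocks]
        del: upt_Suc)
  also have "\<dots> = (\<Prod>i\<in>set ?gaps. \<Prod>\<sigma>\<in>gap_blocks i. h (card \<sigma>))"
    by (rule prod.distinct_set_conv_list[symmetric]) simp
  also have "\<dots> = (\<Prod>i\<le>card \<pi>\<^sub>1. \<Prod>\<sigma>\<in>gap_blocks i. h (card \<sigma>))"
    by (rule prod.mono_neutral_left) (auto simp: empty_gap less_Suc_eq_le simp del: upt_Suc)
  also have "\<dots> = (\<Prod>\<sigma>\<in>(\<Union>i\<le>card \<pi>\<^sub>1. gap_blocks i). h (card \<sigma>))"
    using finite_blocks disjoint_gap_blocks
    by (intro prod.UNION_disjoint[symmetric]) (auto simp: gap_blocks_def)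
  finally show ?thesis by (simp add: other_blocks_eq_UN_gap_blocks)
qed

lemma sum_list_card_cut_Ubar_first_block:
  "(\<Sum>Q\<leftarrow>cut_Ubar P {\<pi>\<^sub>1}. card Q) = card P - 1"
proof -
  have power_sum: "(2::nat) ^ (\<Sum>Q\<leftarrow>Qs. card Q) = (\<Prod>Q\<leftarrow>Qs. 2 ^ card Q)"
    for Qs :: "ncpart list"
    by (induction Qs) (simp_all add: power_add)
  have "(2::nat) ^ (\<Sum>Q\<leftarrow>cut_Ubar P {\<pi>\<^sub>1}. card Q) = 2 ^ card (P - {\<pi>\<^sub>1})"
    using power_sum prod_list_cut_Ubar_first_block[of "\<lambda>_. 2::nat"] by simp
  then show ?thesis using first_block finite_blocks by (simp add: power_inject_exp)
qed

end

lemma obtain_first_block: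
  assumes "nonempty_ncp P"
  obtains n \<pi>\<^sub>1 where "first_block P n \<pi>\<^sub>1"
proof -
  obtain n where n: "n \<ge> 1" "P \<in> NCP n" using assms by (auto simp: nonempty_ncp_def)
  then have "1 \<in> \<Union>P" using Union_NCP by auto
  then obtain \<pi>\<^sub>1 where "\<pi>\<^sub>1 \<in> P" "1 \<in> \<pi>\<^sub>1" by blast
  with n show thesis using that by (simp add: first_block_def)
qed

section \<open>Cuts of multipartitions\<close>

lemma multipartition_nth_NCP:
  assumes "multipartition xs" "i < length xs"
  obtains m where "m \<ge> 1" "xs ! i \<in> NCP m"
proof -
  have "xs ! i \<in> set xs" using assms(2) by simp
  with assms(1) have "nonempty_ncp (xs ! i)" by (simp add: multipartition_def)
  with that show thesis by (auto simp: nonempty_ncp_def)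
qed

lemma finite_multi_cuts:
  assumes "multipartition xs"
  shows "finite (multi_cuts xs)"
proof -
  have "finite (xs ! i)" if "i < length xs" for i
    using multipartition_nth_NCP[OF assms that] finite_NCP by metis
  then have "\<forall>Q\<in>set xs. finite Q" by (auto simp: in_set_conv_nth)
  then have "finite {Ls. set Ls \<subseteq> Pow (\<Union>(set xs)) \<and> length Ls = length xs}"
    by (intro finite_lists_length_eq) simp
  moreover have "multi_cuts xs \<subseteq> {Ls. set Ls \<subseteq> Pow (\<Union>(set xs)) \<and> length Ls = length xs}"
  proof
    fix Ls assume "Ls \<in> multi_cuts xs"
    then have len: "length Ls = length xs" and low: "\<forall>i<length xs. Ls ! i \<subseteq> xs ! i"
      by (auto simp: multi_cuts_def lowerset_def)
    have "L \<in> Pow (\<Union>(set xs))" if "L \<in> set Ls" for L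
    proof -
      obtain i where "i < length xs" "L = Ls ! i" using \<open>L \<in> set Ls\<close> len by (auto simp: in_set_conv_nth)
      with low have "L \<subseteq> xs ! i" "xs ! i \<in> set xs" by simp_all
      then show ?thesis by blast
    qed
    with len show "Ls \<in> {Ls. set Ls \<subseteq> Pow (\<Union>(set xs)) \<and> length Ls = length xs}" by blast
  qed
  ultimately show ?thesis by (rule finite_subset[rotated])
qed

lemma multi_cuts_Cons: "L # Ls \<in> multi_cuts (P # Ps) \<longleftrightarrow> lowerset P L \<and> Ls \<in> multi_cuts Ps"
  by (auto simp: multi_cuts_def All_less_Suc2)

lemma cut_L_blocks:
  assumes "is_partition_of S Q" "L \<subseteq> Q"
  shows "cut_L Q L = standardize L"
  by (simp add: cut_L_def restrict_part_Union_blocks[OF assms])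

lemma nonempty_ncp_standardize_blocks:
  assumes Q: "Q \<in> NCP m" and "L \<subseteq> Q" "L \<noteq> {}"
  shows "nonempty_ncp (standardize L)"
proof -
  have partition: "is_partition_of {1..m} Q" and "noncrossing Q" using Q by (simp_all add: NCP_def)
  have "\<Union>L \<subseteq> {1..m}" using Union_NCP[OF Q] \<open>L \<subseteq> Q\<close> by auto
  then have fin: "finite (\<Union>L)" by (rule finite_subset) simp
  have "is_partition_of (\<Union>L) L" "noncrossing L"
    using is_partition_of_restrict_part[OF partition \<open>\<Union>L \<subseteq> {1..m}\<close>]
      noncrossing_restrict_part[OF \<open>noncrossing Q\<close>, of "\<Union>L"]
    by (simp_all add: restrict_part_Union_blocks[OF partition \<open>L \<subseteq> Q\<close>])
  then have "standardize L \<in> NCP (card (\<Union>L))" by (rule standardize_in_NCP[OF fin])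
  moreover have "\<Union>L \<noteq> {}"
    using \<open>L \<noteq> {}\<close> \<open>is_partition_of (\<Union>L) L\<close> by (auto simp: is_partition_of_def)
  with fin have "card (\<Union>L) \<ge> 1" by (simp add: Suc_le_eq card_gt_0_iff)
  ultimately show ?thesis unfolding nonempty_ncp_def by blast
qed

lemma multipartition_multi_L:
  assumes "multipartition xs" "Ls \<in> multi_cuts xs"
  shows "multipartition (multi_L xs Ls)"
  unfolding multipartition_def multi_L_def
proof
  fix Q assume "Q \<in> set (filter (\<lambda>P. P \<noteq> {}) (map2 cut_L xs Ls))"
  then obtain i where i: "i < length xs" and Q: "Q = cut_L (xs ! i) (Ls ! i)" "Q \<noteq> {}"
    using assms(2) by (auto simp: multi_cuts_def set_zip)
  obtain m where m: "xs ! i \<in> NCP m" using multipartition_nth_NCP[OF assms(1) i] by metis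
  have "Ls ! i \<subseteq> xs ! i" using assms(2) i by (simp add: multi_cuts_def lowerset_def)
  moreover have "is_partition_of {1..m} (xs ! i)" using m by (simp add: NCP_def)
  then have "Q = standardize (Ls ! i)" using Q(1) cut_L_blocks[OF _ \<open>Ls ! i \<subseteq> xs ! i\<close>] by simp
  moreover from this Q(2) have "Ls ! i \<noteq> {}" by (auto simp: standardize_def)
  ultimately show "nonempty_ncp Q" using nonempty_ncp_standardize_blocks[OF m] by simp
qed

lemma multi_L_eq_Nil:
  assumes "multipartition xs" "Ls \<in> multi_cuts xs" "multi_L xs Ls = []"
  shows "Ls = replicate (length xs) {}"
proof (rule nth_equalityI)
  show "length Ls = length (replicate (length xs) {})" using assms(2) by (simp add: multi_cuts_def)
next
  fix i assume "i < length Ls"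
  then have i: "i < length xs" using assms(2) by (simp add: multi_cuts_def)
  then have "(xs ! i, Ls ! i) \<in> set (zip xs Ls)"
    using assms(2) by (auto simp: multi_cuts_def set_zip)
  then have "cut_L (xs ! i) (Ls ! i) = {}"
    using assms(3) by (auto simp: multi_L_def filter_empty_conv)
  moreover obtain m where "xs ! i \<in> NCP m" using multipartition_nth_NCP[OF assms(1) i] by metis
  then have "is_partition_of {1..m} (xs ! i)" by (simp add: NCP_def)
  moreover have "Ls ! i \<subseteq> xs ! i" using assms(2) i by (simp add: multi_cuts_def lowerset_def)
  ultimately have "standardize (Ls ! i) = {}" using cut_L_blocks[of "{1..m}" "xs ! i"] by simp
  with i show "Ls ! i = replicate (length xs) {} ! i" by (simp add: standardize_def)
qed

lemma multi_L_replicate_empty: "multi_L xs (replicate (length xs) {}) = []"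
  by (induction xs) (simp_all add: multi_L_def cut_L_def restrict_part_def standardize_def)

lemma cut_Ubar_empty:
  assumes Q: "Q \<in> NCP m" "m \<ge> 1"
  shows "cut_Ubar Q {} = [Q]"
proof -
  have "gap Q {} 0 = \<Union>Q" by (auto simp: gap_def)
  moreover have "\<Union>Q \<noteq> {}" using Union_NCP[OF Q(1)] Q(2) by auto
  moreover have "is_partition_of {1..m} Q" using Q(1) by (simp add: NCP_def)
  then have "restrict_part Q (\<Union>Q) = Q" by (rule restrict_part_Union_blocks[OF _ order_refl])
  ultimately show ?thesis using standardize_NCP[OF Q(1)] by (simp add: cut_Ubar_def)
qed

lemma multi_Ubar_replicate_empty:
  "multipartition xs \<Longrightarrow> multi_Ubar xs (replicate (length xs) {}) = xs"
  by (induction xs)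
    (auto simp: multi_Ubar_def multipartition_def nonempty_ncp_def cut_Ubar_empty)

section \<open>The half-shuffle exponential of a one-block character\<close>

lemma infinitesimal_char_append:
  assumes "infinitesimal_char f" "multipartition xs" "multipartition ys" "xs \<noteq> []" "ys \<noteq> []"
  shows "f (xs @ ys) = 0"
  using assms by (simp add: infinitesimal_char_def)

locale prec_exponential =
  fixes k :: "nat \<Rightarrow> 'a::comm_ring_1"
    and \<kappa> \<phi> :: "ncpart list \<Rightarrow> 'a"
  assumes kappa_inf: "infinitesimal_char \<kappa>"
    and kappa_I: "\<And>n. n \<ge> 1 \<Longrightarrow> \<kappa> [I_part n] = k n"
    and kappa_other: "\<And>P. nonempty_ncp P \<Longrightarrow> (\<forall>n\<ge>1. P \<noteq> I_part n) \<Longrightarrow> \<kappa> [P] = 0"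
    and phi_fix: "\<And>x. multipartition x \<Longrightarrow> \<phi> x = counit x + prec \<kappa> \<phi> x"
begin

lemma phi_Nil: "\<phi> [] = 1"
  using phi_fix[of "[]"] by (simp add: multipartition_def counit_def prec_def)

lemma kappa_multi_L_eq_0:
  assumes mp: "multipartition (P # Ps)" and fb: "first_block P n \<pi>\<^sub>1"
    and cut: "L # Ls \<in> multi_cuts (P # Ps)" "1 \<in> \<Union>L"
    and other: "L # Ls \<noteq> {\<pi>\<^sub>1} # replicate (length Ps) {}"
  shows "\<kappa> (multi_L (P # Ps) (L # Ls)) = 0"
proof -
  interpret first_block P n \<pi>\<^sub>1 by (fact fb)
  have L: "lowerset P L" and Ls: "Ls \<in> multi_cuts Ps" using cut(1) by (simp_all add: multi_cuts_Cons)
  have "L \<subseteq> P" using L by (simp add: lowerset_def)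
  have "multipartition Ps" using mp by (simp add: multipartition_def)
  have "L \<noteq> {}" using cut(2) by auto
  have "multi_L (P # Ps) (L # Ls) = standardize L # multi_L Ps Ls"
    using cut_L_blocks[OF partition \<open>L \<subseteq> P\<close>] \<open>L \<noteq> {}\<close>
    by (simp add: multi_L_def standardize_def)
  moreover have L_ncp: "nonempty_ncp (standardize L)"
    by (rule nonempty_ncp_standardize_blocks[OF NCP \<open>L \<subseteq> P\<close> \<open>L \<noteq> {}\<close>])
  moreover have "\<kappa> (standardize L # multi_L Ps Ls) = 0"
  proof (cases "multi_L Ps Ls = []")
    case False
    from \<open>multipartition Ps\<close> Ls have "multipartition (multi_L Ps Ls)" by (rule multipartition_multi_L)
    moreover have "multipartition [standardize L]" using L_ncp by (simp add: multipartition_def)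
    ultimately show ?thesis
      using infinitesimal_char_append[OF kappa_inf _ _ _ False, of "[standardize L]"] by simp
  next
    case True
    from \<open>multipartition Ps\<close> Ls True have "Ls = replicate (length Ps) {}"
      by (rule multi_L_eq_Nil)
    with other have "L \<noteq> {\<pi>\<^sub>1}" by simp
    moreover obtain \<beta> where "\<beta> \<in> L" "1 \<in> \<beta>" using cut(2) by blast
    then have "\<pi>\<^sub>1 \<in> L" using first_block_unique \<open>L \<subseteq> P\<close> by blast
    ultimately have "{\<pi>\<^sub>1} \<subset> L" by (simp add: psubset_eq)
    with finite_subset[OF \<open>L \<subseteq> P\<close> finite_blocks] have "1 < card L"
      using psubset_card_mono[of L "{\<pi>\<^sub>1}"] by simp
    moreover have "\<Union>L \<subseteq> {1..n}" using \<open>L \<subseteq> P\<close> Union_blocks by auto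
    then have "finite (\<Union>L)" by (rule finite_subset) simp
    ultimately have "card (standardize L) \<noteq> card (I_part m)" for m
      by (simp add: card_standardize I_part_def)
    then have "\<forall>m\<ge>1. standardize L \<noteq> I_part m" by metis
    with L_ncp True show ?thesis using kappa_other by simp
  qed
  ultimately show ?thesis by simp
qed

lemma phi_Cons_first_block:
  assumes mp: "multipartition (P # Ps)" and fb: "first_block P n \<pi>\<^sub>1"
  shows "\<phi> (P # Ps) = k (card \<pi>\<^sub>1) * \<phi> (cut_Ubar P {\<pi>\<^sub>1} @ Ps)"
proof -
  interpret first_block P n \<pi>\<^sub>1 by (fact fb)
  define cuts where "cuts = {Ls \<in> multi_cuts (P # Ps). 1 \<in> \<Union>(Ls ! 0)}"
  define summand where "summand Ls = \<kappa> (multi_L (P # Ps) Ls) * \<phi> (multi_Ubar (P # Ps) Ls)" for Ls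
  define Ls\<^sub>1 where "Ls\<^sub>1 = {\<pi>\<^sub>1} # replicate (length Ps) ({} :: nat set set)"
  have Ps: "multipartition Ps" using mp by (simp add: multipartition_def)
  have "Ls\<^sub>1 \<in> multi_cuts (P # Ps)"
    using lowerset_first_block by (simp add: Ls\<^sub>1_def multi_cuts_def nth_Cons lowerset_def split: nat.split)
  then have Ls\<^sub>1: "Ls\<^sub>1 \<in> cuts" using one_in_first_block by (simp add: cuts_def Ls\<^sub>1_def)
  have other_cuts: "summand Ls = 0" if Ls: "Ls \<in> cuts" "Ls \<noteq> Ls\<^sub>1" for Ls
  proof -
    obtain L Ls' where "Ls = L # Ls'"
      using Ls(1) by (cases Ls) (auto simp: cuts_def multi_cuts_def)
    with Ls show ?thesis
      using kappa_multi_L_eq_0[OF mp fb] by (simp add: cuts_def Ls\<^sub>1_def summand_def)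
  qed
  have "finite cuts" using finite_multi_cuts[OF mp] by (simp add: cuts_def)
  have "\<phi> (P # Ps) = sum summand cuts"
    using phi_fix[OF mp] by (simp add: counit_def prec_def cuts_def summand_def)
  also have "\<dots> = summand Ls\<^sub>1 + sum summand (cuts - {Ls\<^sub>1})"
    by (rule sum.remove[OF \<open>finite cuts\<close> Ls\<^sub>1])
  also have "sum summand (cuts - {Ls\<^sub>1}) = 0" using other_cuts by (intro sum.neutral) blast
  finally have "\<phi> (P # Ps) = summand Ls\<^sub>1" by simp
  moreover have "multi_L (P # Ps) Ls\<^sub>1 = [I_part (card \<pi>\<^sub>1)]"
    using multi_L_replicate_empty[of Ps] cut_L_blocks[OF partition] first_block
      standardize_singleton[OF finite_block[OF first_block]]
    by (simp add: Ls\<^sub>1_def multi_L_def I_part_def)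
  moreover have "card \<pi>\<^sub>1 \<ge> 1"
    using finite_block[OF first_block] one_in_first_block by (auto simp: Suc_le_eq card_gt_0_iff)
  moreover have "multi_Ubar (P # Ps) Ls\<^sub>1 = cut_Ubar P {\<pi>\<^sub>1} @ Ps"
    using multi_Ubar_replicate_empty[OF Ps] by (simp add: Ls\<^sub>1_def multi_Ubar_def)
  ultimately show ?thesis by (simp add: summand_def kappa_I)
qed

lemma phi_eq_prod_list:
  "multipartition xs \<Longrightarrow> \<phi> xs = (\<Prod>Q\<leftarrow>xs. \<Prod>\<pi>\<in>Q. k (card \<pi>))"
proof (induction "\<Sum>Q\<leftarrow>xs. card Q" arbitrary: xs rule: less_induct)
  case less
  show ?case
  proof (cases xs)
    case Nil
    then show ?thesis by (simp add: phi_Nil)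
  next
    case (Cons P Ps)
    with less.prems have mp: "multipartition (P # Ps)" by simp
    then obtain n \<pi>\<^sub>1 where fb: "first_block P n \<pi>\<^sub>1"
      by (auto simp: multipartition_def elim: obtain_first_block)
    interpret first_block P n \<pi>\<^sub>1 by (fact fb)
    let ?U = "cut_Ubar P {\<pi>\<^sub>1}"
    have "card P \<ge> 1" using first_block finite_blocks by (auto simp: Suc_le_eq card_gt_0_iff)
    then have "(\<Sum>Q\<leftarrow>?U @ Ps. card Q) < (\<Sum>Q\<leftarrow>xs. card Q)"
      using sum_list_card_cut_Ubar_first_block Cons by simp
    moreover have "multipartition (?U @ Ps)"
      using multipartition_cut_Ubar_first_block mp by (auto simp: multipartition_def)
    ultimately have IH: "\<phi> (?U @ Ps) = (\<Prod>Q\<leftarrow>?U @ Ps. \<Prod>\<pi>\<in>Q. k (card \<pi>))"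
      by (rule less.hyps)
    have "(\<Prod>\<pi>\<in>P. k (card \<pi>)) = k (card \<pi>\<^sub>1) * (\<Prod>\<sigma>\<in>P - {\<pi>\<^sub>1}. k (card \<sigma>))"
      using finite_blocks first_block by (simp add: prod.remove)
    then show ?thesis
      using phi_Cons_first_block[OF mp fb] IH prod_list_cut_Ubar_first_block[of k] Cons
      by (simp add: mult.assoc)
  qed
qed

end

lemma coact_zeta_J_part: "coact \<alpha> zeta [J_part n] = (\<Sum>Q\<in>NCP n. \<alpha> [Q])"
proof -
  have "\<Union>(J_part n) = {1..n}" by (auto simp: J_part_def)
  moreover have "refines (J_part n) Q" if "Q \<in> NCP n" for Q
    using Union_NCP[OF that] by (auto simp: refines_def J_part_def)
  ultimately have "{Qs. length Qs = length [J_part n] \<and> (\<forall>i<length [J_part n].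
      Qs ! i \<in> NCP (card (\<Union>([J_part n] ! i))) \<and> refines ([J_part n] ! i) (Qs ! i))}
    = (\<lambda>Q. [Q]) ` NCP n"
    by (auto simp: length_Suc_conv)
  then have "coact \<alpha> zeta [J_part n] = (\<Sum>Qs\<in>(\<lambda>Q. [Q]) ` NCP n. \<alpha> Qs)"
    by (simp add: coact_def quot_char_def zeta_def)
  also have "\<dots> = (\<Sum>Q\<in>NCP n. \<alpha> [Q])" by (simp add: sum.reindex inj_on_def)
  finally show ?thesis .
qed

theorem mainTheorem13:
  fixes k :: "nat \<Rightarrow> 'a::comm_ring_1"
    and \<kappa> \<phi> :: "ncpart list \<Rightarrow> 'a"
  assumes kappa_inf: "infinitesimal_char \<kappa>"
    and kappa_I: "\<And>n. n \<ge> 1 \<Longrightarrow> \<kappa> [I_part n] = k n"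
    and kappa_other: "\<And>P. nonempty_ncp P \<Longrightarrow> (\<forall>n\<ge>1. P \<noteq> I_part n) \<Longrightarrow> \<kappa> [P] = 0"
    and phi_fix: "\<And>x. multipartition x \<Longrightarrow> \<phi> x = counit x + prec \<kappa> \<phi> x"
  shows "(\<forall>P. nonempty_ncp P \<longrightarrow> \<phi> [P] = (\<Prod>\<pi>\<in>P. k (card \<pi>)))
    \<and> (\<forall>n\<ge>1. coact \<phi> zeta [J_part n] = (\<Sum>Q\<in>NCP n. \<Prod>\<pi>\<in>Q. k (card \<pi>)))"
proof -
  interpret prec_exponential k \<kappa> \<phi>
    using assms by unfold_locales
  have single: "\<phi> [P] = (\<Prod>\<pi>\<in>P. k (card \<pi>))" if "nonempty_ncp P" for P
    using phi_eq_prod_list[of "[P]"] that by (simp add: multipartition_def)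
  have "coact \<phi> zeta [J_part n] = (\<Sum>Q\<in>NCP n. \<Prod>\<pi>\<in>Q. k (card \<pi>))" if "n \<ge> 1" for n
    unfolding coact_zeta_J_part using that single
    by (intro sum.cong) (auto simp: nonempty_ncp_def)
  with single show ?thesis by blast
qed

end
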